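(* Let $A$ be a commutative unital ring of characteristic $0$, $n\ge4$, $k\in\{3,\ldots,n-1\}$ and $(b_1,\ldots,b_k)\in A^k$. Let $s=(1_A,n_A-2_A,1_A,2_A,\ldots,2_A)\in A^n$ (last $n-3$ entries equal to $2_A$). Then $(b_1,\ldots,b_k)$ can be used to reduce $s$ (i.e. $(b_1,\ldots,b_k)$ is a $\lambda$-quiddity over $A$ and there exists $(c_1,\ldots,c_{n+2-k})\in A^{n+2-k}$ with $s\sim(c_1,\ldots,c_{n+2-k})\oplus(b_1,\ldots,b_k)$) if and only if $(b_1,\ldots,b_k)=(k_A-2_A,1_A,2_A,\ldots,2_A,1_A)$ or $(b_1,\ldots,b_k)=(1_A,2_A,\ldots,2_A,1_A,k_A-2_A)$, where in each case the number of entries equal to $2_A$ is $k-3$ (possibly zero).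
   Context: $k_A=k\cdot1_A$ for an integer $k$. For $a_1,\ldots,a_n\in A$, $M_n(a_1,\ldots,a_n)=\begin{pmatrix}a_n&-1\\1&0\end{pmatrix}\cdots\begin{pmatrix}a_1&-1\\1&0\end{pmatrix}$. An $n$-tuple $(a_1,\ldots,a_n)\in A^n$ is a $\lambda$-quiddity over $A$ if $M_n(a_1,\ldots,a_n)=\pm\mathrm{Id}$. For $(a_1,\ldots,a_n)\in A^n$, $(b_1,\ldots,b_m)\in A^m$, define $(a_1,\ldots,a_n)\oplus(b_1,\ldots,b_m)=(a_1+b_m,a_2,\ldots,a_{n-1},a_n+b_1,b_2,\ldots,b_{m-1})$. Write $(a_1,\ldots,a_n)\sim(b_1,\ldots,b_n)$ if $(b_1,\ldots,b_n)$ is obtained from $(a_1,\ldots,a_n)$ or from $(a_n,\ldots,a_1)$ by a cyclic permutation. *)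

theory Defs
  imports Main
begin

text \<open>2x2 matrices over A, written as (m11, m12, m21, m22).\<close>
type_synonym 'a mat2 = "'a \<times> 'a \<times> 'a \<times> 'a"

definition mmul2 :: "'a::comm_ring_1 mat2 \<Rightarrow> 'a mat2 \<Rightarrow> 'a mat2" where
  "mmul2 X Y = (case X of (a, b, c, d) \<Rightarrow> case Y of (e, f, g, h) \<Rightarrow>
     (a*e + b*g, a*f + b*h, c*e + d*g, c*f + d*h))"

definition id2 :: "'a::comm_ring_1 mat2" where
  "id2 = (1, 0, 0, 1)"

definition neg_id2 :: "'a::comm_ring_1 mat2" where
  "neg_id2 = (-1, 0, 0, -1)"

definition step_mat :: "'a::comm_ring_1 \<Rightarrow> 'a mat2" where
  "step_mat a = (a, -1, 1, 0)"

text \<open>M_n(a_1,...,a_n) = step(a_n) * ... * step(a_1).\<close>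
definition Mn :: "'a::comm_ring_1 list \<Rightarrow> 'a mat2" where
  "Mn xs = foldl (\<lambda>acc a. mmul2 (step_mat a) acc) id2 xs"

definition lambda_quiddity :: "'a::comm_ring_1 list \<Rightarrow> bool" where
  "lambda_quiddity xs \<longleftrightarrow> Mn xs = id2 \<or> Mn xs = neg_id2"

text \<open>(a_1..a_n) \<oplus> (b_1..b_m) = (a_1+b_m, a_2..a_{n-1}, a_n+b_1, b_2..b_{m-1}).\<close>
definition oplus :: "'a::comm_ring_1 list \<Rightarrow> 'a list \<Rightarrow> 'a list" where
  "oplus as bs =
     [hd as + last bs] @ take (length as - 2) (drop 1 as) @ [last as + hd bs]
     @ take (length bs - 2) (drop 1 bs)"

definition equiv_tuple :: "'a list \<Rightarrow> 'a list \<Rightarrow> bool" where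
  "equiv_tuple as bs \<longleftrightarrow> (\<exists>i. bs = rotate i as \<or> bs = rotate i (rev as))"

definition reduces :: "'a::comm_ring_1 list \<Rightarrow> 'a list \<Rightarrow> bool" where
  "reduces bs s \<longleftrightarrow> lambda_quiddity bs \<and>
     (\<exists>cs. length cs = length s + 2 - length bs \<and> equiv_tuple s (oplus cs bs))"

end

theory Submission
  imports Defs
begin

text \<open>
  Write \<open>b = (b\<^sub>1, w, b\<^sub>k)\<close>. Since \<open>M(b) = step(b\<^sub>k) M(w) step(b\<^sub>1)\<close> and
  \<open>det M(w) = 1\<close>, \<open>b\<close> is a \<open>\<lambda>\<close>-quiddity iff the top-left entry of \<open>M(w)\<close> is \<open>\<pm>1\<close>, and then
  \<open>b\<^sub>1, b\<^sub>k\<close> are determined by \<open>M(w)\<close>. If \<open>b\<close> reduces \<open>s\<close>, the middle part \<open>w\<close>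
  reappears as a window of length \<open>k - 2 \<le> n - 3\<close> in a rotation of \<open>s\<close> (the reversal
  of \<open>s\<close> is itself a rotation). Such a window is \<open>(1,2,\<dots>,2)\<close>, \<open>(2,\<dots>,2,1)\<close>, or a word
  whose matrix has as top-left entry a natural number \<open>\<ge> 2\<close>, which in characteristic 0 is
  not \<open>\<pm>1\<close>. The first two windows force exactly the two claimed tuples, and both are
  realised by explicit complements.
\<close>

definition det2 :: "'a::comm_ring_1 mat2 \<Rightarrow> 'a" where
  "det2 X = (case X of (a, b, c, d) \<Rightarrow> a*d - b*c)"

lemma mmul2_assoc: "mmul2 (mmul2 X Y) Z = mmul2 X (mmul2 Y Z)"
  by (cases X; cases Y; cases Z) (simp add: mmul2_def algebra_simps)

lemma mmul2_id2 [simp]: "mmul2 X id2 = X" "mmul2 id2 X = X"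
  by (cases X; simp add: mmul2_def id2_def)+

lemma det2_mmul2: "det2 (mmul2 X Y) = det2 X * det2 Y"
  by (cases X; cases Y) (simp add: det2_def mmul2_def algebra_simps)

lemma Mn_Nil [simp]: "Mn [] = id2"
  by (simp add: Mn_def)

lemma Mn_snoc: "Mn (xs @ [a]) = mmul2 (step_mat a) (Mn xs)"
  by (simp add: Mn_def)

lemma Mn_append: "Mn (xs @ ys) = mmul2 (Mn ys) (Mn xs)"
proof (induction ys rule: rev_induct)
  case (snoc y ys)
  then show ?case by (simp add: Mn_snoc mmul2_assoc flip: append_assoc)
qed simp

lemma Mn_Cons: "Mn (a # xs) = mmul2 (Mn xs) (step_mat a)"
  using Mn_append[of "[a]" xs] Mn_snoc[of "[]" a] by simp

lemma det2_step_mat: "det2 (step_mat a) = 1"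
  by (simp add: det2_def step_mat_def)

lemma det2_Mn: "det2 (Mn xs) = 1"
  by (induction xs rule: rev_induct)
    (simp_all add: Mn_snoc det2_mmul2 det2_step_mat, simp add: det2_def id2_def)

lemma Mn_replicate_two:
  "Mn (replicate j (2::'a::comm_ring_1)) = (of_nat j + 1, - of_nat j, of_nat j, 1 - of_nat j)"
proof (induction j)
  case (Suc j)
  have "replicate (Suc j) (2::'a) = replicate j 2 @ [2]"
    by (simp add: replicate_append_same)
  with Suc show ?case by (simp add: Mn_snoc mmul2_def step_mat_def algebra_simps)
qed (simp add: id2_def)

lemma Mn_one_twos: "Mn (1 # replicate j 2) = (1, - (of_nat j + 1), 1, - of_nat j)"
  by (simp add: Mn_Cons Mn_replicate_two mmul2_def step_mat_def algebra_simps)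

lemma Mn_twos_one: "Mn (replicate j 2 @ [1]) = (1, -1, of_nat j + 1, - of_nat j)"
  by (simp add: Mn_snoc Mn_replicate_two mmul2_def step_mat_def algebra_simps)

lemma lambda_quiddity_Cons_snoc_iff:
  assumes "Mn w = (p, q, r, t)"
  shows "lambda_quiddity (b1 # w @ [bk]) \<longleftrightarrow>
    (p = 1 \<and> q = - b1 \<and> r = bk) \<or> (p = -1 \<and> q = b1 \<and> r = - bk)"
proof -
  \<comment> \<open>the determinant makes the condition on the top-left entry of \<open>M(b)\<close> redundant\<close>
  have det: "p*t - q*r = 1"
    using det2_Mn[of w] by (simp add: assms det2_def)
  have "Mn (b1 # w @ [bk]) = (bk*(p*b1 + q) - (r*b1 + t), r - bk*p, p*b1 + q, - p)"
    by (simp add: Mn_Cons Mn_snoc assms mmul2_def step_mat_def algebra_simps)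
  then have "lambda_quiddity (b1 # w @ [bk]) \<longleftrightarrow>
      (p = -1 \<and> p*b1 + q = 0 \<and> r - bk*p = 0 \<and> bk*(p*b1 + q) - (r*b1 + t) = 1) \<or>
      (p = 1 \<and> p*b1 + q = 0 \<and> r - bk*p = 0 \<and> bk*(p*b1 + q) - (r*b1 + t) = -1)"
    unfolding lambda_quiddity_def id2_def neg_id2_def by (auto simp: minus_equation_iff)
  moreover have "(p*b1 + q = 0 \<and> r - bk*p = 0 \<and> bk*(p*b1 + q) - (r*b1 + t) = 1)
      \<longleftrightarrow> q = b1 \<and> r = - bk" if "p = -1"
    using det unfolding that by (auto simp: algebra_simps eq_neg_iff_add_eq_0 neg_eq_iff_add_eq_0)
  moreover have "(p*b1 + q = 0 \<and> r - bk*p = 0 \<and> bk*(p*b1 + q) - (r*b1 + t) = -1)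
      \<longleftrightarrow> q = - b1 \<and> r = bk" if "p = 1"
    using det unfolding that by (auto simp: algebra_simps eq_neg_iff_add_eq_0)
  ultimately show ?thesis by blast
qed

lemma of_nat_neq_neg_one: "of_nat N \<noteq> (-1 :: 'a::ring_char_0)"
proof
  assume "of_nat N = (-1 :: 'a)"
  then have "of_nat (N + 1) = (0 :: 'a)" by simp
  then show False by (simp only: of_nat_eq_0_iff)
qed

lemma lambda_quiddity_one_twos_iff:
  "lambda_quiddity (b1 # (1 # replicate j 2) @ [bk]) \<longleftrightarrow>
    b1 = of_nat j + 1 \<and> bk = (1 :: 'a::{comm_ring_1, ring_char_0})"
  using lambda_quiddity_Cons_snoc_iff[OF Mn_one_twos[where 'a='a]]
  by (auto simp: algebra_simps)

lemma lambda_quiddity_twos_one_iff: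
  "lambda_quiddity (b1 # (replicate j 2 @ [1]) @ [bk]) \<longleftrightarrow>
    b1 = 1 \<and> bk = (of_nat j + 1 :: 'a::{comm_ring_1, ring_char_0})"
  using lambda_quiddity_Cons_snoc_iff[OF Mn_twos_one[where 'a='a]]
  by (auto simp: algebra_simps)

lemma not_lambda_quiddity_if_fst_Mn_of_nat:
  assumes "fst (Mn w) = (of_nat N :: 'a::{comm_ring_1, ring_char_0})" and "N \<ge> 2"
  shows "\<not> lambda_quiddity (b1 # w @ [bk])"
proof -
  obtain q r t where "Mn w = (of_nat N, q, r, t)"
    using assms(1) by (cases "Mn w") auto
  with assms(2) show ?thesis
    by (simp add: lambda_quiddity_Cons_snoc_iff of_nat_neq_neg_one)
qed

lemma fst_Mn_append_Cons:
  assumes "Mn u = (1, q, r, t)" and "Mn v = (1, q', r', t')"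
  shows "fst (Mn (u @ x # v)) = x - r + q'"
  by (simp add: Mn_append Mn_Cons assms mmul2_def step_mat_def algebra_simps)

lemma fst_Mn_Cons:
  assumes "Mn v = (1, q', r', t')"
  shows "fst (Mn (x # v)) = x + q'"
  using fst_Mn_append_Cons[of "[]" 0 0 1, OF _ assms] by (simp add: id2_def)

definition s_tuple :: "nat \<Rightarrow> 'a::comm_ring_1 list" where
  "s_tuple n = [1, of_nat n - 2, 1] @ replicate (n - 3) 2"

lemma length_s_tuple: "n \<ge> 3 \<Longrightarrow> length (s_tuple n) = n"
  by (simp add: s_tuple_def)

lemma rev_s_tuple: "n \<ge> 4 \<Longrightarrow> rev (s_tuple n) = rotate 3 (s_tuple n)"
  by (simp add: s_tuple_def rotate_drop_take)

lemma rotate_s_tuple_cases: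
  fixes n c :: nat
  defines "x \<equiv> of_nat n - 2 :: 'a::comm_ring_1"
  assumes "n \<ge> 4"
  obtains a e where "a + e = n - 3"
    and "rotate c (s_tuple n) = replicate a 2 @ [1, x, 1] @ replicate e 2"
  | "rotate c (s_tuple n) = x # 1 # replicate (n - 3) 2 @ [1]"
  | "rotate c (s_tuple n) = 1 # replicate (n - 3) 2 @ [1, x]"
proof -
  define c' where "c' = c mod n"
  have "c' < n" using assms(2) by (simp add: c'_def)
  have rot: "rotate c (s_tuple n) = drop c' (s_tuple n) @ take c' (s_tuple n)"
    using assms(2) by (simp add: c'_def length_s_tuple rotate_conv_mod[of c] rotate_drop_take)
  consider "c' = 0" | "c' = 1" | "c' = 2" | e where "c' = e + 3"
    by atomize_elim presburger
  then show thesis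
  proof cases
    case 1
    with rot show thesis
      by (intro that(1)[of 0 "n - 3"]) (simp_all add: s_tuple_def x_def)
  next
    case 2
    with rot show thesis by (intro that(2)) (simp add: s_tuple_def x_def)
  next
    case 3
    with rot show thesis by (intro that(3)) (simp add: s_tuple_def x_def)
  next
    case (4 e)
    then obtain a where "n = a + e + 3" using \<open>c' < n\<close> by (intro that[of "n - c'"]) simp
    with 4 rot show thesis
      by (intro that(1)[of a e]) (simp_all add: s_tuple_def x_def take_Cons' drop_Cons')
  qed
qed

lemma take_twos_one_x_one_twos_cases:
  fixes a e L :: nat
  defines "w \<equiv> take L (replicate a 2 @ [1, of_nat (a + e + 1), 1]
    @ replicate e (2::'a::comm_ring_1))"
  assumes "1 \<le> L" and "L \<le> a + e"
  shows "w = replicate (L - 1) 2 @ [1] \<or> (\<exists>N\<ge>2. fst (Mn w) = of_nat N)"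
proof -
  have around: "fst (Mn ((replicate a 2 @ [1]) @ of_nat (a + e + 1) # v))
      = of_nat (a + e + 1) - (of_nat a + 1) + q'"
    if "Mn v = (1, q', r', t')" for v :: "'a list" and q' r' t'
    using fst_Mn_append_Cons[OF Mn_twos_one that] .
  consider "L \<le> a" | "L = a + 1" | "L = a + 2" | j where "L = a + 3 + j"
    by atomize_elim presburger
  then show ?thesis
  proof cases
    case 1
    then have "w = replicate L 2" by (simp add: w_def)
    then have "fst (Mn w) = of_nat (L + 1)" by (simp add: Mn_replicate_two)
    with assms(2) show ?thesis by (intro disjI2 exI[of _ "L + 1"]) simp
  next
    case 2
    then show ?thesis by (simp add: w_def)
  next
    case 3
    then have "w = (replicate a 2 @ [1]) @ [of_nat (a + e + 1)]" by (simp add: w_def)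
    then have "fst (Mn w) = of_nat e"
      using around[of "[]" 0 0 1] by (simp add: id2_def)
    moreover have "e \<ge> 2" using 3 assms(3) by simp
    ultimately show ?thesis by blast
  next
    case (4 j)
    then have "w = (replicate a 2 @ [1]) @ of_nat (a + e + 1) # 1 # replicate j 2"
      using assms(3) by (simp add: w_def take_Cons')
    then have "fst (Mn w) = of_nat (a + e + 1) - (of_nat a + 1) - (of_nat j + 1)"
      using around[OF Mn_one_twos[where 'a='a]] by simp
    also have "\<dots> = of_nat (e - j - 1)"
      using 4 assms(3) by (simp add: of_nat_diff)
    finally show ?thesis
      using 4 assms(3) by (intro disjI2 exI[of _ "e - j - 1"]) simp
  qed
qed

lemma take_x_one_twos_one_cases:
  fixes m L :: nat
  defines "w \<equiv> take L (of_nat (m + 1) # 1 # replicate m 2 @ [1 :: 'a::comm_ring_1])"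
  assumes "1 \<le> L" and "L \<le> m"
  shows "\<exists>N\<ge>2. fst (Mn w) = of_nat N"
proof -
  consider "L = 1" | j where "L = j + 2" using assms(2) by atomize_elim presburger
  then show ?thesis
  proof cases
    case 1
    then have "w = [of_nat (m + 1)]" by (simp add: w_def)
    then have "fst (Mn w) = of_nat (m + 1)"
      using fst_Mn_Cons[of "[]" 0 0 1] by (simp add: id2_def)
    with assms show ?thesis by (intro exI[of _ "m + 1"]) simp
  next
    case (2 j)
    then have "w = of_nat (m + 1) # 1 # replicate j 2"
      using assms(3) by (simp add: w_def take_Cons')
    then have "fst (Mn w) = of_nat (m + 1) - (of_nat j + 1)"
      using fst_Mn_Cons[OF Mn_one_twos[where 'a='a]] by simp
    also have "\<dots> = of_nat (m - j)"
      using 2 assms(3) by (simp add: of_nat_diff)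
    finally show ?thesis
      using 2 assms(3) by (intro exI[of _ "m - j"]) simp
  qed
qed

lemma take_rotate_s_tuple_cases:
  fixes n L c :: nat
  defines "w \<equiv> take L (rotate c (s_tuple n :: 'a::comm_ring_1 list))"
  assumes "n \<ge> 4" and "1 \<le> L" and "L \<le> n - 3"
  shows "w = 1 # replicate (L - 1) 2 \<or> w = replicate (L - 1) 2 @ [1]
    \<or> (\<exists>N\<ge>2. fst (Mn w) = of_nat N)"
proof (cases rule: rotate_s_tuple_cases[OF assms(2), of c, where 'a='a])
  case (1 a e)
  moreover have "of_nat n - 2 = (of_nat (a + e + 1) :: 'a)"
    using 1 assms(2) by (simp add: of_nat_diff)
  ultimately have "w = take L (replicate a 2 @ [1, of_nat (a + e + 1), 1] @ replicate e 2)"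
    by (simp add: w_def)
  then show ?thesis
    using take_twos_one_x_one_twos_cases[of L a e, where 'a='a] 1 assms(3,4) by auto
next
  case 2
  moreover have "of_nat n - 2 = (of_nat (n - 3 + 1) :: 'a)"
    using assms(2) by (simp add: of_nat_diff)
  ultimately have "w = take L (of_nat (n - 3 + 1) # 1 # replicate (n - 3) 2 @ [1])"
    by (simp add: w_def)
  then show ?thesis
    using take_x_one_twos_one_cases[of L "n - 3", where 'a='a] assms(3,4) by auto
next
  case 3
  with assms(3,4) have "w = 1 # replicate (L - 1) 2"
    by (cases L) (simp_all add: w_def)
  then show ?thesis by blast
qed

lemma equiv_tuple_iff_rotate:
  assumes "rev xs = rotate j xs"
  shows "equiv_tuple xs ys \<longleftrightarrow> (\<exists>i. ys = rotate i xs)"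
  unfolding equiv_tuple_def assms rotate_rotate by blast

lemma take_rotate_oplus:
  assumes "length cs \<ge> 2"
  shows "take (length w) (rotate (length cs) (oplus cs (b1 # w @ [bk]))) = w"
proof -
  define X where "X = [hd cs + bk] @ take (length cs - 2) (drop 1 cs) @ [last cs + b1]"
  have "oplus cs (b1 # w @ [bk]) = X @ w" and "length X = length cs"
    using assms by (auto simp: oplus_def X_def)
  then show ?thesis by (metis rotate_append append_eq_conv_conj)
qed

lemma Cons_snoc_cases:
  assumes "length b \<ge> 2"
  obtains b1 w bk where "b = b1 # w @ [bk]"
  using assms by (cases b rule: rev_cases; cases "butlast b") auto

lemma reduces_s_tuple_cases:
  fixes b :: "'a::{comm_ring_1, ring_char_0} list"
  assumes "length b = j + 3" and "reduces b (s_tuple (j + 4 + d))"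
  shows "b = (of_nat j + 1) # (1 # replicate j 2) @ [1]
    \<or> b = 1 # (replicate j 2 @ [1]) @ [of_nat j + 1]"
proof -
  let ?s = "s_tuple (j + 4 + d) :: 'a list"
  obtain cs where quid: "lambda_quiddity b" and "length cs = length ?s + 2 - length b"
    and "equiv_tuple ?s (oplus cs b)"
    using assms(2) by (auto simp: reduces_def)
  moreover have "length ?s + 2 - length b = d + 3"
    using assms(1) by (simp add: length_s_tuple)
  moreover obtain i where "oplus cs b = rotate i ?s"
    using \<open>equiv_tuple ?s (oplus cs b)\<close> equiv_tuple_iff_rotate[OF rev_s_tuple[of "j + 4 + d"]]
    by auto
  moreover obtain b1 w bk where b: "b = b1 # w @ [bk]"
    using Cons_snoc_cases[of b] assms(1) by auto
  moreover have "length w = j + 1" using b assms(1) by simp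
  ultimately have "w = take (j + 1) (rotate (d + 3 + i) ?s)"
    using take_rotate_oplus[of cs w b1 bk] by (simp add: rotate_rotate)
  then consider "w = 1 # replicate j 2" | "w = replicate j 2 @ [1]"
    | N where "N \<ge> 2" "fst (Mn w) = of_nat N"
    using take_rotate_s_tuple_cases[of "j + 4 + d" "j + 1" "d + 3 + i", where 'a='a] by auto
  then show ?thesis
  proof cases
    case 1
    then show ?thesis using quid b lambda_quiddity_one_twos_iff by auto
  next
    case 2
    then show ?thesis using quid b lambda_quiddity_twos_one_iff by auto
  next
    case 3
    then show ?thesis using quid b not_lambda_quiddity_if_fst_Mn_of_nat by blast
  qed
qed

lemma reducesI:
  assumes "lambda_quiddity b" and "length cs = length s + 2 - length b"
    and "oplus cs b = rotate i s"
  shows "reduces b s"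
  using assms unfolding reduces_def equiv_tuple_def by blast

lemma reduces_s_tuple_one_twos:
  "reduces ((of_nat j + 1) # (1 # replicate j 2) @ [1])
    (s_tuple (j + 4 + d) :: 'a::{comm_ring_1, ring_char_0} list)"
proof (rule reducesI)
  let ?x = "of_nat (j + 4 + d) - 2 :: 'a"
  let ?cs = "[1] @ replicate d 2 @ [1, of_nat (d + 1) :: 'a]"
  have len: "length ([1, ?x, 1] @ replicate j 2) = j + 3" by simp
  have "oplus ?cs ((of_nat j + 1) # (1 # replicate j 2) @ [1])
      = replicate (d + 1) 2 @ [1, ?x, 1] @ replicate j 2"
    by (simp add: oplus_def algebra_simps)
  also have "\<dots> = rotate (j + 3) (([1, ?x, 1] @ replicate j 2) @ replicate (d + 1) 2)"
    by (metis len rotate_append append_assoc)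
  also have "\<dots> = rotate (j + 3) (s_tuple (j + 4 + d))"
    using replicate_add[of j "d + 1" "2::'a"] by (simp add: s_tuple_def)
  finally show "oplus ?cs ((of_nat j + 1) # (1 # replicate j 2) @ [1])
      = rotate (j + 3) (s_tuple (j + 4 + d))" .
qed (use lambda_quiddity_one_twos_iff[of "of_nat j + 1" j 1]
     in \<open>simp_all add: length_s_tuple\<close>)

lemma reduces_s_tuple_twos_one:
  "reduces (1 # (replicate j 2 @ [1]) @ [of_nat j + 1])
    (s_tuple (j + 4 + d) :: 'a::{comm_ring_1, ring_char_0} list)"
proof (rule reducesI)
  let ?x = "of_nat (j + 4 + d) - 2 :: 'a"
  let ?cs = "[of_nat (d + 1), 1] @ replicate d 2 @ [1 :: 'a]"
  have "oplus ?cs (1 # (replicate j 2 @ [1]) @ [of_nat j + 1])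
      = [?x, 1] @ replicate d 2 @ [2] @ replicate j 2 @ [1]"
    by (simp add: oplus_def algebra_simps)
  also have "\<dots> = rotate 1 ([1] @ [?x, 1] @ replicate d 2 @ [2] @ replicate j 2)"
    by (simp add: rotate1_hd_tl)
  also have "\<dots> = rotate 1 (s_tuple (j + 4 + d))"
    using replicate_add[of d "1 + j" "2::'a"] by (simp add: s_tuple_def add.commute)
  finally show "oplus ?cs (1 # (replicate j 2 @ [1]) @ [of_nat j + 1])
      = rotate 1 (s_tuple (j + 4 + d))" .
qed (use lambda_quiddity_twos_one_iff[of 1 j "of_nat j + 1"]
     in \<open>simp_all add: length_s_tuple\<close>)

theorem lemma4p9:
  fixes b :: "'a::{comm_ring_1, ring_char_0} list" and n k :: nat
  assumes "n \<ge> 4" and "3 \<le> k" and "k \<le> n - 1" and "length b = k"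
  shows "reduces b ([1, of_nat n - 2, 1] @ replicate (n - 3) 2)
    \<longleftrightarrow> (b = [of_nat k - 2, 1] @ replicate (k - 3) 2 @ [1]
         \<or> b = [1] @ replicate (k - 3) 2 @ [1, of_nat k - 2])"
proof -
  define j d where "j = k - 3" and "d = n - k - 1"
  have k: "k = j + 3" and n: "n = j + 4 + d"
    using assms(1-3) by (simp_all add: j_def d_def)
  have s: "[1, of_nat n - 2, 1] @ replicate (n - 3) 2 = (s_tuple (j + 4 + d) :: 'a list)"
    by (simp add: s_tuple_def n)
  have left: "[of_nat k - 2, 1] @ replicate (k - 3) 2 @ [1]
      = (of_nat j + 1) # (1 # replicate j 2) @ [1 :: 'a]"
    by (simp add: k algebra_simps)
  have right: "[1] @ replicate (k - 3) 2 @ [1, of_nat k - 2]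
      = 1 # (replicate j 2 @ [1]) @ [of_nat j + 1 :: 'a]"
    by (simp add: k algebra_simps)
  show ?thesis
    unfolding s left right
    using reduces_s_tuple_cases[of b j d] reduces_s_tuple_one_twos[of j d, where 'a='a]
      reduces_s_tuple_twos_one[of j d, where 'a='a] assms(4) k
    by blast
qed

end
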